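(* Let $u\in\Lambda$ and $(h,\beta)\in\Gamma(u)$. Then for every $j\in\mathbb N$, $\mathbf K^s_u\le\lfloor\mathfrak F_u(j,h,\beta)\rfloor$ (with $\lfloor+\infty\rfloor=+\infty$). Moreover, if $\mathcal S(u,h)\neq\emptyset$, then $\min_{k\in\mathcal S(u,h)}\mathfrak F_u(k,h,\beta)=\mathfrak F_u(\mathbf K^s_u,h,\beta)$.
   Context: $\Lambda$: real sequences with $\sup_n u_n<+\infty$. $\Delta^s_u=\{k:\max_{0\le j\le k}u_j>\sup_{j>k}u_j\}$, $\mathbf K^s_u=\inf\Delta^s_u$ ($\inf\emptyset=+\infty$). $\Omega([0,1])$: functions $h:\mathbb R\to\mathbb R$ whose restriction to $[0,1]$ is strictly increasing and continuous; $h^{-1}_{[0,1]}$ the inverse of that restriction. $\Gamma(u)=\{(h,\beta)\in\Omega([0,1])\times(0,1):u_k\le h(\beta^k)\ \forall k\}$; $\mathcal S(u,h)=\{k:u_k>h(0)\}$. $\mathfrak F_u(k,h,\beta)=\ln(h^{-1}_{[0,1]}(u_k))/\ln\beta$ if $(h,\beta)\in\Gamma(u)$ and $k\in\mathcal S(u,h)$, and $+\infty$ otherwise. *)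

theory Defs
  imports "HOL-Analysis.Analysis" "HOL-Library.Extended_Nat" "HOL-Library.Extended_Real"
begin

definition Lambda :: "(nat \<Rightarrow> real) set" where
  "Lambda = {u. bdd_above (range u)}"

definition DeltaS :: "(nat \<Rightarrow> real) \<Rightarrow> nat set" where
  "DeltaS u = {k. Max (u ` {..k}) > Sup (u ` {k<..})}"

(* K^s_u = inf Delta^s_u, with inf {} = +infinity *)
definition KS :: "(nat \<Rightarrow> real) \<Rightarrow> enat" where
  "KS u = Inf (enat ` DeltaS u)"

definition Omega01 :: "(real \<Rightarrow> real) set" where
  "Omega01 = {h. strict_mono_on {0..1} h \<and> continuous_on {0..1} h}"

definition hinv01 :: "(real \<Rightarrow> real) \<Rightarrow> real \<Rightarrow> real" where
  "hinv01 h y = the_inv_into {0..1} h y"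

definition Gamma :: "(nat \<Rightarrow> real) \<Rightarrow> ((real \<Rightarrow> real) \<times> real) set" where
  "Gamma u = {(h, \<beta>). h \<in> Omega01 \<and> \<beta> \<in> {0<..<1} \<and> (\<forall>k. u k \<le> h (\<beta> ^ k))}"

definition SS :: "(nat \<Rightarrow> real) \<Rightarrow> (real \<Rightarrow> real) \<Rightarrow> nat set" where
  "SS u h = {k. u k > h 0}"

definition FF :: "(nat \<Rightarrow> real) \<Rightarrow> nat \<Rightarrow> (real \<Rightarrow> real) \<Rightarrow> real \<Rightarrow> ereal" where
  "FF u k h \<beta> = (if (h, \<beta>) \<in> Gamma u \<and> k \<in> SS u h
      then ereal (ln (hinv01 h (u k)) / ln \<beta>) else \<infinity>)"

definition efloor :: "ereal \<Rightarrow> ereal" where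
  "efloor x = (case x of ereal r \<Rightarrow> ereal (of_int \<lfloor>r\<rfloor>) | PInfty \<Rightarrow> \<infinity> | MInfty \<Rightarrow> -\<infinity>)"

end

theory Submission
  imports Defs
begin

text \<open>
  For \<open>j \<in> S(u,h)\<close> put \<open>t = h\<inverse>(u j)\<close>, so that \<open>F\<^sub>u(j,h,\<beta>) = log\<^sub>\<beta> t\<close>, and let
  \<open>N = \<lfloor>log\<^sub>\<beta> t\<rfloor>\<close>. Then \<open>\<beta>^(N+1) < t \<le> \<beta>^j\<close>, so \<open>j \<le> N\<close> and every \<open>u i\<close> with \<open>i > N\<close> is
  at most \<open>h(\<beta>^(N+1)) < u j\<close>; hence \<open>N \<in> \<Delta>\<^sup>s\<^sub>u\<close> and \<open>K\<^sup>s\<^sub>u \<le> N\<close>.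
  Conversely, the least element \<open>k\<close> of \<open>\<Delta>\<^sup>s\<^sub>u\<close> is a global maximiser of \<open>u\<close>, because the last
  maximiser of \<open>u\<close> on \<open>{..k}\<close> also lies in \<open>\<Delta>\<^sup>s\<^sub>u\<close>. As \<open>h\<inverse>\<close> is increasing and \<open>ln \<beta> < 0\<close>,
  \<open>F\<^sub>u(j,h,\<beta>)\<close> decreases as \<open>u j\<close> increases, so its minimum over \<open>S(u,h)\<close> is attained at \<open>k\<close>.
\<close>

lemma Omega01_less:
  assumes "h \<in> Omega01" "x \<in> {0..1}" "y \<in> {0..1}" "x < y"
  shows "h x < h y"
  using assms unfolding Omega01_def strict_mono_on_def by fastforce

lemma Omega01_le:
  assumes "h \<in> Omega01" "x \<in> {0..1}" "y \<in> {0..1}" "x \<le> y"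
  shows "h x \<le> h y"
  using Omega01_less[OF assms(1-3)] assms(4) by (cases "x = y") auto

lemma hinv01_bounds:
  assumes h: "h \<in> Omega01" and b: "0 < b" "b \<le> 1" and y: "h 0 < y" "y \<le> h b"
  shows "0 < hinv01 h y" "hinv01 h y \<le> b" "h (hinv01 h y) = y"
proof -
  have "continuous_on {0..b} h"
    using h b unfolding Omega01_def by (auto intro: continuous_on_subset)
  then obtain t where t: "0 \<le> t" "t \<le> b" "h t = y"
    using IVT'[of h 0 y b] y b by auto
  have "inj_on h {0..1}"
    using h unfolding Omega01_def by (auto intro: strict_mono_on_imp_inj_on)
  then have "hinv01 h y = t"
    unfolding hinv01_def using the_inv_into_f_f[of h "{0..1}" t] t b by auto
  moreover have "t \<noteq> 0" using t y by auto
  ultimately show "0 < hinv01 h y" "hinv01 h y \<le> b" "h (hinv01 h y) = y"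
    using t by auto
qed

lemma hinv01_mono:
  assumes h: "h \<in> Omega01" and bc: "0 < b" "b \<le> 1" "0 < c" "c \<le> 1"
    and y: "h 0 < y" "y \<le> h b" and z: "h 0 < z" "z \<le> h c" and "y \<le> z"
  shows "hinv01 h y \<le> hinv01 h z"
proof (rule ccontr)
  note Y = hinv01_bounds[OF h bc(1,2) y] and Z = hinv01_bounds[OF h bc(3,4) z]
  assume "\<not> ?thesis"
  then have "h (hinv01 h z) < h (hinv01 h y)"
    using Y Z bc by (intro Omega01_less[OF h]) auto
  then show False using Y(3) Z(3) \<open>y \<le> z\<close> by simp
qed

lemma le_ln_div_ln:
  fixes \<beta> t :: real
  assumes "0 < \<beta>" "\<beta> < 1" "0 < t" "t \<le> \<beta> ^ j"
  shows "real j \<le> ln t / ln \<beta>"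
proof -
  have "ln t \<le> real j * ln \<beta>"
    using assms ln_realpow[of \<beta> j] by (metis ln_le_cancel_iff zero_less_power)
  then show ?thesis using assms by (simp add: le_divide_eq)
qed

lemma power_Suc_floor_ln_div_ln_less:
  fixes \<beta> t :: real
  assumes "0 < \<beta>" "\<beta> < 1" "0 < t" "0 \<le> ln t / ln \<beta>"
  shows "\<beta> ^ Suc (nat \<lfloor>ln t / ln \<beta>\<rfloor>) < t"
proof -
  define N where "N = Suc (nat \<lfloor>ln t / ln \<beta>\<rfloor>)"
  have "ln t / ln \<beta> < real N"
    unfolding N_def using assms(4) by linarith
  then have "ln (\<beta> ^ N) < ln t"
    using assms by (simp add: ln_realpow divide_less_eq mult.commute)
  then show ?thesis
    unfolding N_def using assms by (simp add: ln_less_cancel_iff)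
qed

lemma DeltaS_I:
  assumes "j \<le> N" and "\<And>i. N < i \<Longrightarrow> u i \<le> c" and "c < u j"
  shows "N \<in> DeltaS u"
proof -
  have "Sup (u ` {N<..}) \<le> c"
    using assms(2) by (intro cSUP_least) auto
  also have "c < u j" by fact
  also have "u j \<le> Max (u ` {..N})"
    using assms(1) by (intro Max_ge) auto
  finally show ?thesis unfolding DeltaS_def by simp
qed

lemma floor_exponent_in_DeltaS:
  assumes G: "(h, \<beta>) \<in> Gamma u" and j: "j \<in> SS u h"
  defines "F \<equiv> ln (hinv01 h (u j)) / ln \<beta>"
  shows "real j \<le> F" and "nat \<lfloor>F\<rfloor> \<in> DeltaS u"
proof -
  have h: "h \<in> Omega01" and b: "0 < \<beta>" "\<beta> < 1" and ub: "\<And>k. u k \<le> h (\<beta> ^ k)"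
    using G unfolding Gamma_def by auto
  have pow01: "\<beta> ^ k \<in> {0..1}" for k
    using b by (simp add: power_le_one)
  define t where "t = hinv01 h (u j)"
  have uj: "h 0 < u j" using j unfolding SS_def by simp
  have t: "0 < t" "t \<le> \<beta> ^ j" "h t = u j"
    unfolding t_def using hinv01_bounds[OF h _ _ uj ub] b pow01[of j] by auto
  have F_eq: "F = ln t / ln \<beta>" unfolding F_def t_def ..
  show jF: "real j \<le> F"
    unfolding F_eq using le_ln_div_ln[OF b t(1,2)] .
  define N where "N = nat \<lfloor>F\<rfloor>"
  have "\<beta> ^ Suc N < t"
    unfolding N_def F_eq using jF F_eq by (intro power_Suc_floor_ln_div_ln_less[OF b t(1)]) simp
  then have "h (\<beta> ^ Suc N) < h t"
    using t pow01[of j] by (intro Omega01_less[OF h pow01]) auto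
  moreover have "u i \<le> h (\<beta> ^ Suc N)" if "N < i" for i
  proof -
    have "\<beta> ^ i \<le> \<beta> ^ Suc N" using that b by (intro power_decreasing) auto
    then have "h (\<beta> ^ i) \<le> h (\<beta> ^ Suc N)" by (rule Omega01_le[OF h pow01 pow01])
    then show ?thesis using ub[of i] by linarith
  qed
  moreover have "j \<le> N"
    unfolding N_def using jF by linarith
  ultimately show "nat \<lfloor>F\<rfloor> \<in> DeltaS u"
    unfolding N_def[symmetric] using t(3) by (intro DeltaS_I[of j N u "h (\<beta> ^ Suc N)"]) auto
qed

text \<open>Beyond the last maximiser of \<open>u\<close> on \<open>{..k}\<close>, \<open>u\<close> stays strictly below the maximum:
  up to \<open>k\<close> because only finitely many indices are involved, beyond \<open>k\<close> because \<open>k \<in> \<Delta>\<^sup>s\<^sub>u\<close>.\<close>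

lemma DeltaS_has_global_max:
  assumes bdd: "bdd_above (range u)" and k: "k \<in> DeltaS u"
  obtains i where "i \<le> k" "i \<in> DeltaS u" "\<And>j. u j \<le> u i"
proof -
  define M where "M = Max (u ` {..k})"
  define S where "S = Sup (u ` {k<..})"
  have SM: "S < M" using k unfolding DeltaS_def M_def S_def by simp
  have le_S: "u i \<le> S" if "k < i" for i
    unfolding S_def using that by (intro cSUP_upper bdd_above_mono[OF bdd]) auto
  have le_M: "u i \<le> M" if "i \<le> k" for i
    unfolding M_def using that by (intro Max_ge) auto
  define I where "I = {i. i \<le> k \<and> u i = M}"
  have "M \<in> u ` {..k}" unfolding M_def by (intro Max_in) auto
  then have "I \<noteq> {}" unfolding I_def by auto
  moreover have "finite I" unfolding I_def by simp
  ultimately have i0: "Max I \<in> I" and above_i0: "\<And>i. i \<in> I \<Longrightarrow> i \<le> Max I"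
    by simp_all
  define c where "c = Max (insert S (u ` {Max I<..k}))"
  have "u i < M" if "Max I < i" "i \<le> k" for i
    using le_M[OF that(2)] above_i0[of i] that unfolding I_def by fastforce
  then have "c < M"
    unfolding c_def using SM by (subst Max_less_iff) auto
  moreover have "u i \<le> c" if "Max I < i" for i
  proof (cases "i \<le> k")
    case True
    then show ?thesis unfolding c_def using that by (intro Max_ge) auto
  next
    case False
    then have "u i \<le> S" using le_S by simp
    also have "S \<le> c" unfolding c_def by (intro Max_ge) auto
    finally show ?thesis .
  qed
  ultimately have "Max I \<in> DeltaS u"
    using i0 by (intro DeltaS_I[of "Max I" "Max I" u c]) (auto simp: I_def)
  moreover have "u j \<le> u (Max I)" for j
    using i0 le_M[of j] le_S[of j] SM unfolding I_def by (cases "j \<le> k") auto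
  ultimately show ?thesis using that i0 unfolding I_def by blast
qed

lemma least_DeltaS_global_max:
  assumes "bdd_above (range u)" "k \<in> DeltaS u" "\<And>i. i \<in> DeltaS u \<Longrightarrow> k \<le> i"
  shows "u j \<le> u k"
  using DeltaS_has_global_max[OF assms(1,2)] assms(3) by (metis le_antisym)

lemma KS_le: "n \<in> DeltaS u \<Longrightarrow> KS u \<le> enat n"
  unfolding KS_def by (auto intro: Inf_lower)

lemma KS_eq_least:
  assumes "k \<in> DeltaS u" "\<And>i. i \<in> DeltaS u \<Longrightarrow> k \<le> i"
  shows "KS u = enat k"
  using assms KS_le[of k u] unfolding KS_def by (auto intro!: antisym Inf_greatest)

lemma FF_eq:
  "(h, \<beta>) \<in> Gamma u \<Longrightarrow> k \<in> SS u h \<Longrightarrow> FF u k h \<beta> = ereal (ln (hinv01 h (u k)) / ln \<beta>)"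
  unfolding FF_def by simp

lemma FF_antimono:
  assumes G: "(h, \<beta>) \<in> Gamma u" and jk: "j \<in> SS u h" "k \<in> SS u h" and "u j \<le> u k"
  shows "FF u k h \<beta> \<le> FF u j h \<beta>"
proof -
  have h: "h \<in> Omega01" and b: "0 < \<beta>" "\<beta> < 1" and ub: "\<And>k. u k \<le> h (\<beta> ^ k)"
    using G unfolding Gamma_def by auto
  have pow: "0 < \<beta> ^ i" "\<beta> ^ i \<le> 1" for i
    using b by (simp_all add: power_le_one)
  have u0: "h 0 < u j" "h 0 < u k" using jk unfolding SS_def by simp_all
  have "hinv01 h (u j) \<le> hinv01 h (u k)"
    using hinv01_mono[OF h pow pow u0(1) ub u0(2) ub] \<open>u j \<le> u k\<close> .
  moreover have "0 < hinv01 h (u j)"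
    using hinv01_bounds(1)[OF h pow u0(1) ub] .
  ultimately have "ln (hinv01 h (u j)) \<le> ln (hinv01 h (u k))" by simp
  then have "ln (hinv01 h (u k)) / ln \<beta> \<le> ln (hinv01 h (u j)) / ln \<beta>"
    using b by (intro divide_right_mono_neg) auto
  then show ?thesis using FF_eq[OF G] jk by simp
qed

theorem mainTheorem6:
  fixes u :: "nat \<Rightarrow> real" and h :: "real \<Rightarrow> real" and \<beta> :: real
  assumes "u \<in> Lambda" and "(h, \<beta>) \<in> Gamma u"
  shows "(\<forall>j::nat. ereal_of_enat (KS u) \<le> efloor (FF u j h \<beta>))
       \<and> (SS u h \<noteq> {} \<longrightarrow>
            (\<exists>k. KS u = enat k \<and>
               (\<exists>m\<in>SS u h. FF u m h \<beta> = FF u k h \<beta> \<and> (\<forall>j\<in>SS u h. FF u m h \<beta> \<le> FF u j h \<beta>))))"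
proof (intro conjI allI impI)
  fix j
  show "ereal_of_enat (KS u) \<le> efloor (FF u j h \<beta>)"
  proof (cases "j \<in> SS u h")
    case True
    define F where "F = ln (hinv01 h (u j)) / ln \<beta>"
    note F_props = floor_exponent_in_DeltaS[OF assms(2) True, folded F_def]
    have "ereal_of_enat (KS u) \<le> ereal_of_enat (enat (nat \<lfloor>F\<rfloor>))"
      using KS_le[OF F_props(2)] by (simp only: ereal_of_enat_le_iff)
    also have "\<dots> = efloor (FF u j h \<beta>)"
      using F_props(1) FF_eq[OF assms(2) True] by (simp add: efloor_def F_def)
    finally show ?thesis .
  qed (simp add: FF_def efloor_def)
next
  assume "SS u h \<noteq> {}"
  then obtain j where "j \<in> SS u h" by blast
  then obtain n where "n \<in> DeltaS u" using floor_exponent_in_DeltaS(2)[OF assms(2)] by blast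
  define k where "k = (LEAST k. k \<in> DeltaS u)"
  have k: "k \<in> DeltaS u" unfolding k_def by (rule LeastI) fact
  have least: "k \<le> i" if "i \<in> DeltaS u" for i unfolding k_def using that by (rule Least_le)
  have max: "u i \<le> u k" for i
    using least_DeltaS_global_max[OF _ k least] assms(1) unfolding Lambda_def by simp
  with \<open>j \<in> SS u h\<close> have "k \<in> SS u h" unfolding SS_def using order.strict_trans2 by blast
  then show "\<exists>k. KS u = enat k \<and>
      (\<exists>m\<in>SS u h. FF u m h \<beta> = FF u k h \<beta> \<and> (\<forall>j\<in>SS u h. FF u m h \<beta> \<le> FF u j h \<beta>))"
    using KS_eq_least[OF k least] FF_antimono[OF assms(2) _ _ max] by blast
qed

end
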